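(* For $n\ge1$, $\left|\Pi_n\wr C_2(1^11^2,1^12^2,1^21^1)\right|=\sum_{i=0}^nB(i)B(n-i)$, where $B(m)$ is the $m$th Bell number.
   Context: For $n\ge0$ let $[n]=\{1,\dots,n\}$. A $2$-colored set partition of $[n]$ is a set partition of $[n]$ together with an assignment of a color from $\{1,2\}$ to each element; $\Pi_n\wr C_2$ is the set of these. For a set $S$ of patterns, $\Pi_n\wr C_2(S)$ is the set of such colored partitions avoiding every pattern in $S$ in the pattern sense. For the patterns used here: $\sigma$ contains $1^11^2$ iff there are $i<j$ in the same block with $i$ colored $1$ and $j$ colored $2$; $1^21^1$ iff there are $i<j$ in the same block with $i$ colored $2$ and $j$ colored $1$; $1^12^2$ iff there are $i<j$ in different blocks with $i$ colored $1$ and $j$ colored $2$. $B(m)$ is the number of set partitions of $[m]$, with $B(0)=1$. *)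

theory Defs
  imports Main "HOL-Library.Disjoint_Sets" "HOL-Library.FuncSet"
begin

definition Bell :: "nat \<Rightarrow> nat" where
  "Bell m = card {P. partition_on {1..m} P}"

definition colored_partitions :: "nat \<Rightarrow> (nat set set \<times> (nat \<Rightarrow> nat)) set" where
  "colored_partitions n = {(P, c). partition_on {1..n} P \<and> c \<in> {1..n} \<rightarrow>\<^sub>E {1, 2}}"

definition same_block :: "nat set set \<Rightarrow> nat \<Rightarrow> nat \<Rightarrow> bool" where
  "same_block P i j \<longleftrightarrow> (\<exists>B\<in>P. i \<in> B \<and> j \<in> B)"

definition contains_11_12 :: "nat \<Rightarrow> nat set set \<times> (nat \<Rightarrow> nat) \<Rightarrow> bool" where
  "contains_11_12 n \<sigma> \<longleftrightarrow> (\<exists>i\<in>{1..n}. \<exists>j\<in>{1..n}. i < j \<and> same_block (fst \<sigma>) i j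
      \<and> snd \<sigma> i = 1 \<and> snd \<sigma> j = 2)"

definition contains_12_11 :: "nat \<Rightarrow> nat set set \<times> (nat \<Rightarrow> nat) \<Rightarrow> bool" where
  "contains_12_11 n \<sigma> \<longleftrightarrow> (\<exists>i\<in>{1..n}. \<exists>j\<in>{1..n}. i < j \<and> same_block (fst \<sigma>) i j
      \<and> snd \<sigma> i = 2 \<and> snd \<sigma> j = 1)"

definition contains_11_22 :: "nat \<Rightarrow> nat set set \<times> (nat \<Rightarrow> nat) \<Rightarrow> bool" where
  "contains_11_22 n \<sigma> \<longleftrightarrow> (\<exists>i\<in>{1..n}. \<exists>j\<in>{1..n}. i < j \<and> \<not> same_block (fst \<sigma>) i j
      \<and> snd \<sigma> i = 1 \<and> snd \<sigma> j = 2)"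

end

theory Submission imports Defs begin

text \<open>Avoiding both \<open>1\<^sup>11\<^sup>2\<close> and \<open>1\<^sup>12\<^sup>2\<close> means that no element colored 1 precedes an
  element colored 2, whether or not they share a block; so the coloring is \<open>k\<close> 2s followed
  by \<open>n - k\<close> 1s, for a unique \<open>0 \<le> k \<le> n\<close>. For such a coloring, avoiding \<open>1\<^sup>21\<^sup>1\<close> says that no block meets both
  \<open>[k]\<close> and \<open>{k+1..n}\<close>, i.e. the partition is the union of a partition of \<open>[k]\<close> and one of
  \<open>{k+1..n}\<close>, and there are \<open>B(k) B(n-k)\<close> of those.\<close>

lemma partition_on_image:
  assumes "partition_on A P" "inj_on f A"
  shows "partition_on (f ` A) ((`) f ` P)"
proof -
  have "(`) f ` P - {{}} = (`) f ` P"
    using partition_onD3[OF assms(1)] by auto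
  with partition_on_inj_image[OF assms] show ?thesis by simp
qed

lemma card_partition_on_bij_betw:
  assumes f: "bij_betw f A B"
  shows "card {P. partition_on A P} = card {P. partition_on B P}"
proof (rule bij_betw_same_card)
  let ?g = "inv_into A f"
  have inj: "inj_on f A" and img: "f ` A = B" using f by (auto simp: bij_betw_def)
  have g: "bij_betw ?g B A" using bij_betw_inv_into[OF f] .
  show "bij_betw ((`) ((`) f)) {P. partition_on A P} {P. partition_on B P}"
  proof (rule bij_betw_byWitness[where f' = "(`) ((`) ?g)"])
    show "\<forall>P\<in>{P. partition_on A P}. (`) ?g ` (`) f ` P = P"
    proof
      fix P assume "P \<in> {P. partition_on A P}"
      then have "?g ` f ` X = X" if "X \<in> P" for X
        using that by (intro inv_into_image_cancel[OF inj]) (auto simp: partition_on_def)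
      then show "(`) ?g ` (`) f ` P = P" by (metis (no_types, lifting) image_cong image_ident image_image)
    qed
    show "\<forall>P\<in>{P. partition_on B P}. (`) f ` (`) ?g ` P = P"
    proof
      fix P assume "P \<in> {P. partition_on B P}"
      then have "f ` ?g ` X = X" if "X \<in> P" for X
        using that by (intro image_inv_into_cancel[OF img]) (auto simp: partition_on_def)
      then show "(`) f ` (`) ?g ` P = P" by (metis (no_types, lifting) image_cong image_ident image_image)
    qed
    show "(`) ((`) f) ` {P. partition_on A P} \<subseteq> {P. partition_on B P}"
      using partition_on_image[OF _ inj] img by auto
    show "(`) ((`) ?g) ` {P. partition_on B P} \<subseteq> {P. partition_on A P}"
      using partition_on_image[OF _ bij_betw_imp_inj_on[OF g]] bij_betw_imp_surj_on[OF g] by auto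
  qed
qed

lemma card_partition_on_shifted_interval: "card {P. partition_on {k+1..n} P} = Bell (n - k)"
proof -
  have "bij_betw (\<lambda>x. x + k) {1..n-k} {k+1..n}"
    by (rule bij_betw_byWitness[where f' = "\<lambda>x. x - k"]) (auto simp: image_iff intro!: bexI[where x = "_ - k"])
  from card_partition_on_bij_betw[OF this] show ?thesis unfolding Bell_def by simp
qed

definition split_partitions :: "'a set \<Rightarrow> 'a set \<Rightarrow> 'a set set set" where
  "split_partitions A B = {P. partition_on (A \<union> B) P \<and> (\<forall>X\<in>P. X \<subseteq> A \<or> X \<subseteq> B)}"

lemma partition_on_Un:
  assumes "partition_on A P" "partition_on B Q" "A \<inter> B = {}"
  shows "partition_on (A \<union> B) (P \<union> Q)"
proof (rule partition_onI)
  show "\<Union>(P \<union> Q) = A \<union> B" "{} \<notin> P \<union> Q"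
    using assms(1,2) by (auto simp: partition_on_def)
  show "disjnt X Y" if "X \<in> P \<union> Q" "Y \<in> P \<union> Q" "X \<noteq> Y" for X Y
    using that assms by (auto simp: partition_on_def disjnt_def pairwise_def) blast+
qed

lemma partition_on_blocks_within:
  assumes "partition_on (A \<union> B) P" "\<forall>X\<in>P. X \<subseteq> A \<or> X \<subseteq> B" "A \<inter> B = {}"
  shows "partition_on A {X \<in> P. X \<subseteq> A}"
proof (rule partition_onI)
  show "\<Union>{X \<in> P. X \<subseteq> A} = A"
  proof
    show "A \<subseteq> \<Union>{X \<in> P. X \<subseteq> A}"
    proof
      fix x assume "x \<in> A"
      then obtain X where "X \<in> P" "x \<in> X" using partition_onD1[OF assms(1)] by blast
      with \<open>x \<in> A\<close> assms(2,3) have "X \<subseteq> A" by blast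
      with \<open>X \<in> P\<close> \<open>x \<in> X\<close> show "x \<in> \<Union>{X \<in> P. X \<subseteq> A}" by blast
    qed
  qed blast
qed (use assms(1) in \<open>auto simp: partition_on_def disjnt_def pairwise_def\<close>)

lemma bij_betw_split_partitions:
  assumes "A \<inter> B = {}"
  shows "bij_betw (\<lambda>(P, Q). P \<union> Q) ({P. partition_on A P} \<times> {Q. partition_on B Q})
           (split_partitions A B)"
proof (rule bij_betw_byWitness[where f' = "\<lambda>R. ({X \<in> R. X \<subseteq> A}, {X \<in> R. X \<subseteq> B})"])
  have not_within: "\<not> X \<subseteq> D" if "partition_on C P" "X \<in> P" "C \<inter> D = {}" for C D P and X :: "'a set"
  proof
    assume "X \<subseteq> D"
    moreover have "X \<subseteq> C" "X \<noteq> {}" using that by (auto simp: partition_on_def)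
    ultimately show False using \<open>C \<inter> D = {}\<close> by blast
  qed
  have disj': "B \<inter> A = {}" using assms by blast
  show "\<forall>PQ\<in>{P. partition_on A P} \<times> {Q. partition_on B Q}.
      (\<lambda>R. ({X \<in> R. X \<subseteq> A}, {X \<in> R. X \<subseteq> B})) ((\<lambda>(P, Q). P \<union> Q) PQ) = PQ"
  proof
    fix PQ assume "PQ \<in> {P. partition_on A P} \<times> {Q. partition_on B Q}"
    then obtain P Q where PQ: "PQ = (P, Q)" and P: "partition_on A P" and Q: "partition_on B Q"
      by blast
    have "{X \<in> P \<union> Q. X \<subseteq> A} = P"
      using not_within[OF Q _ disj'] partition_onD1[OF P] by blast
    moreover have "{X \<in> P \<union> Q. X \<subseteq> B} = Q"
      using not_within[OF P _ assms] partition_onD1[OF Q] by blast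
    ultimately show "(\<lambda>R. ({X \<in> R. X \<subseteq> A}, {X \<in> R. X \<subseteq> B})) ((\<lambda>(P, Q). P \<union> Q) PQ) = PQ"
      unfolding PQ by simp
  qed
  show "\<forall>R\<in>split_partitions A B. (\<lambda>(P, Q). P \<union> Q) ({X \<in> R. X \<subseteq> A}, {X \<in> R. X \<subseteq> B}) = R"
    by (auto simp: split_partitions_def)
  show "(\<lambda>(P, Q). P \<union> Q) ` ({P. partition_on A P} \<times> {Q. partition_on B Q}) \<subseteq> split_partitions A B"
    using partition_on_Un[OF _ _ assms] by (fastforce simp: split_partitions_def partition_on_def)
  show "(\<lambda>R. ({X \<in> R. X \<subseteq> A}, {X \<in> R. X \<subseteq> B})) ` split_partitions A B
      \<subseteq> {P. partition_on A P} \<times> {Q. partition_on B Q}"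
    using partition_on_blocks_within[OF _ _ assms]
      partition_on_blocks_within[of B A, OF _ _ disj']
    by (fastforce simp: split_partitions_def Un_commute)
qed

lemma finite_split_partitions: "finite (A \<union> B) \<Longrightarrow> finite (split_partitions A B)"
  by (rule finite_subset[OF _ finitely_many_partition_on]) (auto simp: split_partitions_def)

lemma card_split_partitions:
  assumes "A \<inter> B = {}"
  shows "card (split_partitions A B) = card {P. partition_on A P} * card {Q. partition_on B Q}"
  using bij_betw_same_card[OF bij_betw_split_partitions[OF assms]] by (simp add: card_cartesian_product)

definition prefix_coloring :: "nat \<Rightarrow> nat \<Rightarrow> nat \<Rightarrow> nat" where
  "prefix_coloring k n = (\<lambda>i\<in>{1..n}. if i \<le> k then 2 else 1)"

definition color_rise :: "nat \<Rightarrow> (nat \<Rightarrow> nat) \<Rightarrow> bool" where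
  "color_rise n c \<longleftrightarrow> (\<exists>i\<in>{1..n}. \<exists>j\<in>{1..n}. i < j \<and> c i = 1 \<and> c j = 2)"

lemma prefix_coloring_eq_2_iff: "i \<in> {1..n} \<Longrightarrow> prefix_coloring k n i = 2 \<longleftrightarrow> i \<le> k"
  by (simp add: prefix_coloring_def)

lemma prefix_coloring_eq_1_iff: "i \<in> {1..n} \<Longrightarrow> prefix_coloring k n i = 1 \<longleftrightarrow> k < i"
  by (simp add: prefix_coloring_def)

lemma prefix_coloring_PiE: "prefix_coloring k n \<in> {1..n} \<rightarrow>\<^sub>E {1, 2}"
  by (simp add: prefix_coloring_def restrict_PiE_iff)

lemma inj_on_prefix_coloring: "inj_on (\<lambda>k. prefix_coloring k n) {0..n}"
proof (rule inj_onI, rule ccontr)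
  fix k l assume "k \<in> {0..n}" "l \<in> {0..n}" "k \<noteq> l"
    and eq: "prefix_coloring k n = prefix_coloring l n"
  then have "max k l \<in> {1..n}" by auto
  with eq have "max k l \<le> k \<longleftrightarrow> max k l \<le> l" by (metis prefix_coloring_eq_2_iff)
  with \<open>k \<noteq> l\<close> show False by linarith
qed

lemma not_color_rise_prefix_coloring: "\<not> color_rise n (prefix_coloring k n)"
proof
  assume "color_rise n (prefix_coloring k n)"
  then obtain i j where i: "i \<in> {1..n}" and j: "j \<in> {1..n}" and "i < j"
    and "prefix_coloring k n i = 1" "prefix_coloring k n j = 2"
    unfolding color_rise_def by blast
  then have "k < i" "j \<le> k"
    using prefix_coloring_eq_1_iff[OF i] prefix_coloring_eq_2_iff[OF j] by blast+
  with \<open>i < j\<close> show False by simp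
qed

lemma contains_12_11_prefix_coloring_iff:
  assumes "partition_on {1..n} P"
  shows "contains_12_11 n (P, prefix_coloring k n) \<longleftrightarrow>
         (\<exists>X\<in>P. \<not> (X \<subseteq> {1..k} \<or> X \<subseteq> {k+1..n}))"
proof
  assume "contains_12_11 n (P, prefix_coloring k n)"
  then obtain i j X where i: "i \<in> {1..n}" and j: "j \<in> {1..n}" and "X \<in> P" "i \<in> X" "j \<in> X"
    and "prefix_coloring k n i = 2" "prefix_coloring k n j = 1"
    unfolding contains_12_11_def same_block_def fst_conv snd_conv by blast
  moreover from this have "i \<le> k" "k < j"
    using prefix_coloring_eq_2_iff[OF i] prefix_coloring_eq_1_iff[OF j] by blast+
  ultimately show "\<exists>X\<in>P. \<not> (X \<subseteq> {1..k} \<or> X \<subseteq> {k+1..n})"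
    by (intro bexI[of _ X]) auto
next
  assume "\<exists>X\<in>P. \<not> (X \<subseteq> {1..k} \<or> X \<subseteq> {k+1..n})"
  then obtain X i j where "X \<in> P" "i \<in> X" "j \<in> X" "i \<notin> {k+1..n}" "j \<notin> {1..k}" by blast
  moreover have "X \<subseteq> {1..n}" using assms \<open>X \<in> P\<close> by (auto simp: partition_on_def)
  ultimately have i: "i \<in> {1..n}" and j: "j \<in> {1..n}" and "i \<le> k" "k < j" by auto
  then have "prefix_coloring k n i = 2" "prefix_coloring k n j = 1"
    using prefix_coloring_eq_2_iff[OF i] prefix_coloring_eq_1_iff[OF j] by blast+
  with i j \<open>i \<le> k\<close> \<open>k < j\<close> \<open>X \<in> P\<close> \<open>i \<in> X\<close> \<open>j \<in> X\<close>
  show "contains_12_11 n (P, prefix_coloring k n)"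
    unfolding contains_12_11_def same_block_def fst_conv snd_conv
    by (intro bexI[of _ i] bexI[of _ j] conjI bexI[of _ X]) auto
qed

lemma not_color_rise_imp_prefix_coloring:
  assumes c: "c \<in> {1..n} \<rightarrow>\<^sub>E {1, 2}" and no_rise: "\<not> color_rise n c"
  shows "\<exists>k\<le>n. c = prefix_coloring k n"
proof -
  define k where "k = Max (insert 0 {i \<in> {1..n}. c i = 2})"
  have fin: "finite (insert 0 {i \<in> {1..n}. c i = 2})"
    using finite_subset[of "{i \<in> {1..n}. c i = 2}" "{1..n}"] by auto
  have "k \<in> insert 0 {i \<in> {1..n}. c i = 2}" unfolding k_def using fin by (rule Max_in) simp
  then have k: "k = 0 \<or> k \<in> {1..n} \<and> c k = 2" by blast
  have le_k: "i \<le> k" if "i \<in> {1..n}" "c i = 2" for i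
    unfolding k_def using fin by (rule Max_ge) (use that in simp)
  have two_upto_k: "c i = 2" if "i \<in> {1..n}" "i \<le> k" for i
  proof (rule ccontr)
    assume "c i \<noteq> 2"
    with c that have "c i = 1" by auto
    moreover from that k have "k \<in> {1..n}" "c k = 2" by auto
    moreover from \<open>c i \<noteq> 2\<close> \<open>c k = 2\<close> \<open>i \<le> k\<close> have "i < k" by (metis le_neq_implies_less)
    ultimately have "color_rise n c"
      unfolding color_rise_def using that by (intro bexI[of _ i] bexI[of _ k]) auto
    with no_rise show False by contradiction
  qed
  have "c = prefix_coloring k n"
  proof (rule extensionalityI[where A = "{1..n}"])
    show "c \<in> extensional {1..n}" using c by (simp add: PiE_iff)
    show "prefix_coloring k n \<in> extensional {1..n}" by (simp add: prefix_coloring_def)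
    fix i assume i: "i \<in> {1..n}"
    with c have "c i \<in> {1, 2}" by auto
    moreover have "c i \<noteq> 2" if "\<not> i \<le> k" using le_k i that by blast
    ultimately show "c i = prefix_coloring k n i" using i two_upto_k by (auto simp: prefix_coloring_def)
  qed
  moreover have "k \<le> n" using k by auto
  ultimately show ?thesis by blast
qed

lemma contains_11_12_or_contains_11_22_iff:
  "contains_11_12 n \<sigma> \<or> contains_11_22 n \<sigma> \<longleftrightarrow> color_rise n (snd \<sigma>)"
  unfolding contains_11_12_def contains_11_22_def color_rise_def by blast

lemma card_split_partitions_interval:
  "card (split_partitions {1..k} {k+1..n}) = Bell k * Bell (n - k)"
proof -
  have "card (split_partitions {1..k} {k+1..n})
      = card {P. partition_on {1..k} P} * card {P. partition_on {k+1..n} P}"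
    by (rule card_split_partitions) auto
  then show ?thesis by (simp only: Bell_def[symmetric] card_partition_on_shifted_interval)
qed

lemma interval_Un_split: "k \<le> n \<Longrightarrow> {1..k} \<union> {k+1..n} = {1..n::nat}"
  by auto

lemma pattern_avoiding_eq_image:
  "{\<sigma> \<in> colored_partitions n. \<not> contains_11_12 n \<sigma> \<and> \<not> contains_11_22 n \<sigma> \<and> \<not> contains_12_11 n \<sigma>}
   = (\<lambda>(k, P). (P, prefix_coloring k n)) ` (SIGMA k:{0..n}. split_partitions {1..k} {k+1..n})"
  (is "?L = ?f ` ?S")
proof
  show "?L \<subseteq> ?f ` ?S"
  proof clarify
    fix P c assume "(P, c) \<in> colored_partitions n" and avoids:
      "\<not> contains_11_12 n (P, c)" "\<not> contains_11_22 n (P, c)" "\<not> contains_12_11 n (P, c)"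
    then have P: "partition_on {1..n} P" and c: "c \<in> {1..n} \<rightarrow>\<^sub>E {1, 2}"
      by (auto simp: colored_partitions_def)
    have "\<not> color_rise n c"
      using avoids contains_11_12_or_contains_11_22_iff[of n "(P, c)"] by simp
    with c obtain k where "k \<le> n" and c_eq: "c = prefix_coloring k n"
      using not_color_rise_imp_prefix_coloring by blast
    with P avoids(3) have "P \<in> split_partitions {1..k} {k+1..n}"
      unfolding split_partitions_def interval_Un_split[OF \<open>k \<le> n\<close>]
      using contains_12_11_prefix_coloring_iff[OF P] by blast
    with \<open>k \<le> n\<close> c_eq show "(P, c) \<in> ?f ` ?S" by force
  qed
  show "?f ` ?S \<subseteq> ?L"
  proof
    fix \<sigma> assume "\<sigma> \<in> ?f ` ?S"
    then obtain k P where "k \<in> {0..n}" "P \<in> split_partitions {1..k} {k+1..n}"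
      and \<sigma>: "\<sigma> = (P, prefix_coloring k n)"
      by auto
    then have P: "partition_on {1..n} P" and within: "\<forall>X\<in>P. X \<subseteq> {1..k} \<or> X \<subseteq> {k+1..n}"
      unfolding split_partitions_def using interval_Un_split[of k n] by auto
    show "\<sigma> \<in> ?L"
      unfolding \<sigma> using P prefix_coloring_PiE not_color_rise_prefix_coloring within
        contains_11_12_or_contains_11_22_iff[of n "(P, prefix_coloring k n)"]
        contains_12_11_prefix_coloring_iff[OF P]
      by (simp add: colored_partitions_def)
  qed
qed

theorem mainTheorem16:
  fixes n :: nat
  assumes "n \<ge> 1"
  shows "card {\<sigma> \<in> colored_partitions n. \<not> contains_11_12 n \<sigma> \<and> \<not> contains_11_22 n \<sigma>
                \<and> \<not> contains_12_11 n \<sigma>} = (\<Sum>i = 0..n. Bell i * Bell (n - i))"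
proof -
  let ?f = "\<lambda>(k, P). (P, prefix_coloring k n)"
  let ?S = "SIGMA k:{0..n}. split_partitions {1..k} {k+1..n}"
  have "inj_on ?f ?S"
    using inj_on_prefix_coloring[of n] by (auto simp: inj_on_def)
  then have "card (?f ` ?S) = card ?S" by (rule card_image)
  also have "\<dots> = (\<Sum>k = 0..n. card (split_partitions {1..k} {k+1..n}))"
    by (rule card_SigmaI) (auto intro: finite_split_partitions)
  also have "\<dots> = (\<Sum>k = 0..n. Bell k * Bell (n - k))"
    by (simp only: card_split_partitions_interval)
  finally show ?thesis by (simp add: pattern_avoiding_eq_image)
qed

end
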